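(* Let $A$ be a separable Banach algebra with $A^2=A$ and $\Phi_A\neq\emptyset$. Then $\inf\{\|\phi\|:\phi\in\Phi_A\}>0$.
   Context: $A^2$ denotes the linear span of all products $ab$, $a,b\in A$. $\Phi_A$ is the set of nonzero multiplicative linear functionals (characters) on $A$, and $\|\phi\|$ is the norm of $\phi$ as a functional on $A$. *)

theory Defs
  imports "HOL-Analysis.Analysis"
begin

text \<open>Complex Banach algebras (not necessarily unital or commutative):
  a real Banach algebra carrying a compatible complex scalar multiplication.\<close>

class complex_banach_algebra = real_normed_algebra + banach +
  fixes scaleC :: "complex \<Rightarrow> 'a \<Rightarrow> 'a"
  assumes scaleC_add_right: "scaleC c (x + y) = scaleC c x + scaleC c y"
    and scaleC_add_left: "scaleC (c + d) x = scaleC c x + scaleC d x"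
    and scaleC_scaleC: "scaleC c (scaleC d x) = scaleC (c * d) x"
    and scaleC_one: "scaleC 1 x = x"
    and scaleC_of_real: "scaleC (complex_of_real r) x = r *\<^sub>R x"
    and norm_scaleC: "norm (scaleC c x) = cmod c * norm x"
    and scaleC_left_mult: "scaleC c (x * y) = scaleC c x * y"
    and scaleC_right_mult: "scaleC c (x * y) = x * scaleC c y"

definition cspan :: "'a::complex_banach_algebra set \<Rightarrow> 'a set" where
  "cspan S = {x. \<exists>T c. finite T \<and> T \<subseteq> S \<and> x = (\<Sum>t\<in>T. scaleC (c t) t)}"

definition square_span :: "'a::complex_banach_algebra set" where
  "square_span = cspan {a * b | a b. True}"

definition characters :: "('a::complex_banach_algebra \<Rightarrow> complex) set" where
  "characters = {\<phi>. (\<forall>x y. \<phi> (x + y) = \<phi> x + \<phi> y)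
                   \<and> (\<forall>c x. \<phi> (scaleC c x) = c * \<phi> x)
                   \<and> (\<forall>x y. \<phi> (x * y) = \<phi> x * \<phi> y)
                   \<and> (\<exists>x. \<phi> x \<noteq> 0)}"

definition separable_space :: "'a::metric_space itself \<Rightarrow> bool" where
  "separable_space _ \<longleftrightarrow> (\<exists>D::'a set. countable D \<and> closure D = UNIV)"

end

theory Submission
  imports Defs
begin

text \<open>Every character has norm at most one: if \<open>\<phi> b = 1\<close> with \<open>norm b < 1\<close>, the
  Neumann series \<open>c = b + b\<^sup>2 + \<dots>\<close> satisfies \<open>b c = c - b\<close>, and applying \<open>\<phi>\<close> gives
  \<open>\<phi> c = \<phi> c - 1\<close>.  Since \<open>A = A\<^sup>2\<close>, the algebra is the union of the sets \<open>S n\<close> of sums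
  of at most \<open>n\<close> products of elements of norm at most \<open>n\<close>, so by the Baire category theorem
  the closure of some \<open>S n\<close> contains a closed ball of radius \<open>r > 0\<close>.  A character \<open>\<phi>\<close>
  is bounded by \<open>n\<^sup>3 \<parallel>\<phi>\<parallel>\<^sup>2\<close> on \<open>S n\<close>, hence on that ball, which forces
  \<open>\<parallel>\<phi>\<parallel> \<le> 2 n\<^sup>3 \<parallel>\<phi>\<parallel>\<^sup>2 / r\<close>, i.e. \<open>\<parallel>\<phi>\<parallel> \<ge> r / (2 n\<^sup>3)\<close> uniformly in \<open>\<phi>\<close>.\<close>

lemma character_add: "\<phi> \<in> characters \<Longrightarrow> \<phi> (x + y) = \<phi> x + \<phi> y"
  by (simp add: characters_def)

lemma character_scaleC: "\<phi> \<in> characters \<Longrightarrow> \<phi> (scaleC c x) = c * \<phi> x"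
  by (simp add: characters_def)

lemma character_mult: "\<phi> \<in> characters \<Longrightarrow> \<phi> (x * y) = \<phi> x * \<phi> y"
  by (simp add: characters_def)

lemma character_nonzero: "\<phi> \<in> characters \<Longrightarrow> \<exists>x. \<phi> x \<noteq> 0"
  by (simp add: characters_def)

lemma character_scaleR: "\<phi> \<in> characters \<Longrightarrow> \<phi> (r *\<^sub>R x) = of_real r * \<phi> x"
  by (metis character_scaleC scaleC_of_real)

lemma character_diff: "\<phi> \<in> characters \<Longrightarrow> \<phi> (x - y) = \<phi> x - \<phi> y"
  by (metis add_diff_cancel character_add diff_add_cancel)

lemma character_zero: "\<phi> \<in> characters \<Longrightarrow> \<phi> 0 = 0"
  using character_diff[of \<phi> 0 0] by simp

lemma character_sum: "\<phi> \<in> characters \<Longrightarrow> \<phi> (\<Sum>t\<in>T. f t) = (\<Sum>t\<in>T. \<phi> (f t))"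
  by (induction T rule: infinite_finite_induct) (auto simp: character_add character_zero)

text \<open>The algebra need not be unital, so \<open>b ^ Suc n\<close> is not available.\<close>

primrec succ_power :: "'a::real_normed_algebra \<Rightarrow> nat \<Rightarrow> 'a" where
  "succ_power b 0 = b"
| "succ_power b (Suc n) = b * succ_power b n"

lemma norm_succ_power_le: "norm (succ_power b n) \<le> norm b ^ Suc n"
proof (induction n)
  case (Suc n)
  have "norm (succ_power b (Suc n)) \<le> norm b * norm (succ_power b n)"
    by (simp add: norm_mult_ineq)
  also have "\<dots> \<le> norm b * norm b ^ Suc n"
    using Suc by (simp add: mult_left_mono)
  finally show ?case by simp
qed simp

lemma quasi_inverse_exists:
  fixes b :: "'a::{real_normed_algebra, banach}"
  assumes "norm b < 1"
  obtains c where "b * c = c - b"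
proof
  have "summable (\<lambda>n. norm b ^ Suc n)"
    using assms by (simp add: summable_geometric)
  then have summable: "summable (succ_power b)"
    by (rule summable_comparison_test[rotated]) (use norm_succ_power_le in blast)
  define c where "c = suminf (succ_power b)"
  have "(\<lambda>n. succ_power b (Suc n)) sums (c - b)"
    using summable by (subst sums_Suc_iff) (simp add: c_def summable_sums)
  moreover have "(\<lambda>n. succ_power b (Suc n)) sums (b * c)"
    using sums_mult[OF summable_sums[OF summable], of b] by (simp add: c_def)
  ultimately show "b * c = c - b"
    by (simp add: sums_unique2)
qed

lemma norm_character_le:
  assumes \<phi>: "\<phi> \<in> characters"
  shows "norm (\<phi> a) \<le> norm a"
proof (rule ccontr)
  assume "\<not> ?thesis"
  then have less: "norm a < norm (\<phi> a)" and nonzero: "\<phi> a \<noteq> 0"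
    by auto
  define b where "b = scaleC (1 / \<phi> a) a"
  have "\<phi> b = 1"
    using nonzero by (simp add: b_def character_scaleC[OF \<phi>])
  moreover have "norm b < 1"
    using less nonzero by (simp add: b_def norm_scaleC norm_divide divide_less_eq)
  then obtain c where "b * c = c - b"
    by (rule quasi_inverse_exists)
  then have "\<phi> b * \<phi> c = \<phi> c - \<phi> b"
    by (metis \<phi> character_diff character_mult)
  ultimately show False
    by simp
qed

lemma bounded_linear_character: "\<phi> \<in> characters \<Longrightarrow> bounded_linear \<phi>"
  by (rule bounded_linear_intro[where K = 1])
    (auto simp: character_add character_scaleR scaleR_conv_of_real norm_character_le)

lemma onorm_character_pos: "\<phi> \<in> characters \<Longrightarrow> 0 < onorm \<phi>"
  using onorm_pos_lt[OF bounded_linear_character] character_nonzero by blast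

definition bounded_product_sums :: "nat \<Rightarrow> 'a::real_normed_algebra set" where
  "bounded_product_sums n =
     {\<Sum>t\<in>T. f t * g t | T f g. finite (T :: 'a set) \<and> card T \<le> n \<and>
        (\<forall>t\<in>T. norm (f t) \<le> real n \<and> norm (g t) \<le> real n)}"

lemma square_span_subset_UN_bounded_product_sums:
  "square_span \<subseteq> (\<Union>n. bounded_product_sums n)"
proof
  fix x :: 'a
  assume "x \<in> square_span"
  then obtain T c where T: "finite T" "T \<subseteq> {a * b | a b. True}"
    and x: "x = (\<Sum>t\<in>T. scaleC (c t) t)"
    unfolding square_span_def cspan_def by blast
  have "\<forall>t\<in>T. \<exists>a b. t = a * b"
    using T(2) by blast
  then obtain a b where ab: "\<And>t. t \<in> T \<Longrightarrow> t = a t * b t"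
    by metis
  define f where "f t = scaleC (c t) (a t)" for t
  have x_sum: "x = (\<Sum>t\<in>T. f t * b t)"
    unfolding x f_def by (intro sum.cong refl) (metis ab scaleC_left_mult)
  obtain m :: nat where m: "(\<Sum>t\<in>T. norm (f t) + norm (b t)) \<le> real m"
    using real_arch_simple by blast
  define n where "n = max m (card T)"
  have bounds: "norm (f t) \<le> real n \<and> norm (b t) \<le> real n" if "t \<in> T" for t
  proof -
    have "norm (f t) + norm (b t) \<le> (\<Sum>t\<in>T. norm (f t) + norm (b t))"
      using T(1) that by (intro member_le_sum) auto
    moreover have "real m \<le> real n"
      by (simp add: n_def)
    ultimately show ?thesis
      using m norm_ge_zero[of "f t"] norm_ge_zero[of "b t"] by linarith
  qed
  moreover have "card T \<le> n"
    by (simp add: n_def)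
  ultimately have "x \<in> bounded_product_sums n"
    unfolding bounded_product_sums_def using x_sum T(1) by blast
  then show "x \<in> (\<Union>n. bounded_product_sums n)"
    by blast
qed

lemma norm_character_bounded_product_sums_le:
  fixes x :: "'a::complex_banach_algebra"
  assumes \<phi>: "\<phi> \<in> characters" and x: "x \<in> bounded_product_sums n"
  shows "norm (\<phi> x) \<le> real n ^ 3 * (onorm \<phi>)\<^sup>2"
proof -
  define K where "K = onorm \<phi>"
  have "0 \<le> K"
    unfolding K_def using onorm_character_pos[OF \<phi>] by simp
  obtain T :: "'a set" and f g where T: "finite T" "card T \<le> n"
    and fg: "\<And>t. t \<in> T \<Longrightarrow> norm (f t) \<le> real n \<and> norm (g t) \<le> real n"
    and x_eq: "x = (\<Sum>t\<in>T. f t * g t)"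
    using x unfolding bounded_product_sums_def by blast
  have norm_\<phi>_le: "norm (\<phi> y) \<le> K * real n" if "norm y \<le> real n" for y
  proof -
    have "norm (\<phi> y) \<le> K * norm y"
      unfolding K_def by (rule onorm[OF bounded_linear_character[OF \<phi>]])
    also have "\<dots> \<le> K * real n"
      using that \<open>0 \<le> K\<close> by (rule mult_left_mono)
    finally show ?thesis .
  qed
  have "norm (\<phi> x) \<le> (\<Sum>t\<in>T. norm (\<phi> (f t)) * norm (\<phi> (g t)))"
    unfolding x_eq character_sum[OF \<phi>] character_mult[OF \<phi>]
    by (rule order_trans[OF norm_sum]) (simp add: norm_mult)
  also have "\<dots> \<le> real (card T) * ((K * real n) * (K * real n))"
  proof (rule sum_bounded_above)
    fix t assume "t \<in> T"
    then show "norm (\<phi> (f t)) * norm (\<phi> (g t)) \<le> (K * real n) * (K * real n)"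
      using fg norm_\<phi>_le \<open>0 \<le> K\<close> by (intro mult_mono) auto
  qed
  also have "\<dots> \<le> real n * ((K * real n) * (K * real n))"
    using T(2) \<open>0 \<le> K\<close> by (intro mult_right_mono) auto
  finally show ?thesis
    by (simp add: K_def power2_eq_square power3_eq_cube mult_ac)
qed

lemma onorm_le_of_bounded_on_cball:
  fixes f :: "'a::real_normed_vector \<Rightarrow> 'b::real_normed_vector"
  assumes f: "bounded_linear f" and "0 < r"
    and bounded: "\<And>x. x \<in> cball x0 r \<Longrightarrow> norm (f x) \<le> M"
  shows "onorm f \<le> 2 * M / r"
proof (rule onorm_bound)
  have "norm (f x0) \<le> M"
    using bounded \<open>0 < r\<close> by simp
  then have "0 \<le> M"
    by (rule order_trans[OF norm_ge_zero])
  then show "0 \<le> 2 * M / r"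
    using \<open>0 < r\<close> by simp
next
  fix z
  show "norm (f z) \<le> 2 * M / r * norm z"
  proof (cases "z = 0")
    case True
    then show ?thesis
      using linear_0[OF bounded_linear.linear[OF f]] by simp
  next
    case False
    define y where "y = (r / norm z) *\<^sub>R z"
    have "x0 + y \<in> cball x0 r" "x0 \<in> cball x0 r"
      using False \<open>0 < r\<close> by (auto simp: y_def dist_norm)
    then have "norm (f (x0 + y)) \<le> M" "norm (f x0) \<le> M"
      using bounded by blast+
    then have "norm (f (x0 + y) - f x0) \<le> 2 * M"
      using norm_triangle_ineq4[of "f (x0 + y)" "f x0"] by linarith
    moreover have "f (x0 + y) - f x0 = (r / norm z) *\<^sub>R f z"
      using bounded_linear.linear[OF f] by (simp add: y_def linear_add linear_scale)
    ultimately have "r / norm z * norm (f z) \<le> 2 * M"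
      using \<open>0 < r\<close> by simp
    then show ?thesis
      using False \<open>0 < r\<close> by (simp add: field_simps)
  qed
qed

lemma onorm_character_ge:
  fixes x0 :: "'a::complex_banach_algebra" and \<phi> :: "'a \<Rightarrow> complex"
  assumes \<phi>: "\<phi> \<in> characters" and "0 < r"
    and ball: "cball x0 r \<subseteq> closure (bounded_product_sums n)"
  shows "r / (2 * (real n ^ 3 + 1)) \<le> onorm \<phi>"
proof -
  define K where "K = onorm \<phi>"
  have "0 < K"
    unfolding K_def by (rule onorm_character_pos[OF \<phi>])
  have "continuous_on (closure (bounded_product_sums n)) \<phi>"
    by (intro linear_continuous_on bounded_linear_character[OF \<phi>])
  moreover have "\<forall>y\<in>bounded_product_sums n. norm (\<phi> y) \<le> real n ^ 3 * K\<^sup>2"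
    using norm_character_bounded_product_sums_le[OF \<phi>] by (simp add: K_def)
  ultimately have "norm (\<phi> x) \<le> real n ^ 3 * K\<^sup>2" if "x \<in> cball x0 r" for x
    using continuous_on_closure_norm_le ball that by blast
  then have "K \<le> 2 * (real n ^ 3 * K\<^sup>2) / r"
    unfolding K_def
    by (rule onorm_le_of_bounded_on_cball[OF bounded_linear_character[OF \<phi>] \<open>0 < r\<close>])
  then have "r \<le> 2 * real n ^ 3 * K"
    using \<open>0 < r\<close> \<open>0 < K\<close> by (simp add: field_simps power2_eq_square)
  also have "\<dots> \<le> 2 * (real n ^ 3 + 1) * K"
    using \<open>0 < K\<close> by simp
  finally have "r \<le> 2 * (real n ^ 3 + 1) * K" .
  moreover have "0 < 2 * (real n ^ 3 + 1)"
    by (simp add: add_nonneg_pos)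
  ultimately show ?thesis
    by (simp add: K_def pos_divide_le_eq mult_ac)
qed

lemma Baire_closure_interior_nonempty:
  fixes S :: "nat \<Rightarrow> 'a::complete_space set"
  assumes "(\<Union>n. S n) = UNIV"
  shows "\<exists>n. interior (closure (S n)) \<noteq> {}"
proof (rule ccontr)
  assume "\<not> ?thesis"
  then have "euclidean interior_of (\<Union>n. closure (S n)) = {}"
    by (intro Baire_category_alt) (auto simp: completely_metrizable_space_euclidean)
  moreover have "(\<Union>n. closure (S n)) = UNIV"
    using assms closure_subset by blast
  ultimately show False
    by simp
qed

theorem proposition3p10:
  assumes "separable_space TYPE('a::complex_banach_algebra)"
    and "(square_span :: 'a set) = UNIV"
    and "(characters :: ('a \<Rightarrow> complex) set) \<noteq> {}"
  shows "(INF \<phi> \<in> (characters :: ('a \<Rightarrow> complex) set). onorm \<phi>) > 0"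
proof -
  have "(\<Union>n. bounded_product_sums n) = (UNIV :: 'a set)"
    using square_span_subset_UN_bounded_product_sums assms(2) by blast
  then obtain n and x0 :: 'a where "x0 \<in> interior (closure (bounded_product_sums n))"
    using Baire_closure_interior_nonempty by blast
  then obtain r where "0 < r" and ball: "cball x0 r \<subseteq> closure (bounded_product_sums n)"
    by (meson open_contains_cball open_interior interior_subset order_trans)
  have "r / (2 * (real n ^ 3 + 1)) \<le> (INF \<phi> \<in> (characters :: ('a \<Rightarrow> complex) set). onorm \<phi>)"
    using assms(3) onorm_character_ge[OF _ \<open>0 < r\<close> ball] by (intro cINF_greatest) auto
  moreover have "0 < r / (2 * (real n ^ 3 + 1))"
    using \<open>0 < r\<close> by (simp add: add_nonneg_pos)
  ultimately show ?thesis
    by linarith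
qed

end
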